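(* For any integer $n\ge3$, with $P_n$ the path of order $n$, $$\gamma_{(2,2,2)}(P_n)=2\gamma_t(P_n)=\begin{cases} n & \text{if } n\equiv 0\pmod 4,\\ n+1 & \text{if } n\equiv 1,3\pmod 4,\\ n+2 & \text{if } n\equiv 2\pmod 4.\end{cases}$$
   Context: $N(v)$ is the open neighbourhood. $\gamma_{(2,2,2)}(G)$ is the minimum of $\sum_v f(v)$ over functions $f:V(G)\to\{0,1,2\}$ with $\sum_{u\in N(v)}f(u)\ge2$ for every vertex $v$. $\gamma_t(G)$ is the total domination number (minimum size of $S$ such that every vertex has a neighbour in $S$). *)

theory Defs
  imports Main
begin

text \<open>A finite simple graph is given by a vertex set V and a symmetric irreflexive
adjacency relation E. Open neighbourhood of v.\<close>

definition nbhd :: "'a set \<Rightarrow> ('a \<Rightarrow> 'a \<Rightarrow> bool) \<Rightarrow> 'a \<Rightarrow> 'a set" where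
  "nbhd V E v = {u \<in> V. E v u}"

definition is_222_function :: "'a set \<Rightarrow> ('a \<Rightarrow> 'a \<Rightarrow> bool) \<Rightarrow> ('a \<Rightarrow> nat) \<Rightarrow> bool" where
  "is_222_function V E f \<longleftrightarrow>
     (\<forall>v\<in>V. f v \<in> {0,1,2}) \<and> (\<forall>v\<in>V. (\<Sum>u\<in>nbhd V E v. f u) \<ge> 2)"

definition gamma_222 :: "'a set \<Rightarrow> ('a \<Rightarrow> 'a \<Rightarrow> bool) \<Rightarrow> nat" where
  "gamma_222 V E = (LEAST w. \<exists>f. is_222_function V E f \<and> w = (\<Sum>v\<in>V. f v))"

definition is_total_dominating :: "'a set \<Rightarrow> ('a \<Rightarrow> 'a \<Rightarrow> bool) \<Rightarrow> 'a set \<Rightarrow> bool" where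
  "is_total_dominating V E S \<longleftrightarrow> S \<subseteq> V \<and> (\<forall>v\<in>V. \<exists>u\<in>S. E v u)"

definition gamma_t :: "'a set \<Rightarrow> ('a \<Rightarrow> 'a \<Rightarrow> bool) \<Rightarrow> nat" where
  "gamma_t V E = (LEAST k. \<exists>S. is_total_dominating V E S \<and> card S = k)"

definition path_V :: "nat \<Rightarrow> nat set" where
  "path_V n = {0..<n}"

definition path_E :: "nat \<Rightarrow> nat \<Rightarrow> bool" where
  "path_E i j \<longleftrightarrow> i = Suc j \<or> j = Suc i"

end

theory Submission
  imports Defs
begin

text \<open>
  Doubling a total dominating set yields a (2,2,2)-function of twice its size, so both
  parameters are determined as soon as a lower bound on the weight of (2,2,2)-functions is
  attained by doubling a total dominating set.
  On the path the condition at vertex \<open>j + 1\<close> reads \<open>f j + f (j + 2) \<ge> 2\<close>, so any four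
  consecutive vertices carry weight at least 4, while the end vertices force \<open>f 1 \<ge> 2\<close> and
  \<open>f (n - 2) \<ge> 2\<close>. Covering the path by a window of three vertices at the start, blocks of
  four and a short window at the end gives the lower bound. It is attained by doubling the
  vertices \<open>i\<close> with \<open>i mod 4 \<in> {1, 2}\<close> together with \<open>n - 2\<close>.
\<close>

lemma total_dominating_imp_222_function:
  assumes "is_total_dominating V E S" "finite V"
  shows "is_222_function V E (\<lambda>v. if v \<in> S then 2 else 0)"
  unfolding is_222_function_def
proof (intro conjI ballI)
  fix v assume "v \<in> V"
  then obtain u where u: "u \<in> S" "E v u" using assms(1) by (auto simp: is_total_dominating_def)
  then have "u \<in> nbhd V E v" using assms(1) by (auto simp: nbhd_def is_total_dominating_def)
  moreover have "finite (nbhd V E v)" using assms(2) by (simp add: nbhd_def)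
  ultimately have "(if u \<in> S then 2 else 0) \<le> (\<Sum>w\<in>nbhd V E v. if w \<in> S then 2 else 0 :: nat)"
    by (intro member_le_sum) auto
  then show "(\<Sum>w\<in>nbhd V E v. if w \<in> S then 2 else 0 :: nat) \<ge> 2" using u by simp
qed simp

lemma sum_double_indicator:
  assumes "S \<subseteq> V" "finite V"
  shows "(\<Sum>v\<in>V. if v \<in> S then 2 else 0 :: nat) = 2 * card S"
proof -
  have "(\<Sum>v\<in>V. if v \<in> S then 2 else 0 :: nat) = (\<Sum>v\<in>V \<inter> S. 2)"
    using assms(2) by (simp add: sum.If_cases Int_def)
  also have "V \<inter> S = S" using assms(1) by blast
  finally show ?thesis by simp
qed

lemma gamma_222_gamma_t_eqI:
  assumes "finite V"
    and lower: "\<And>f. is_222_function V E f \<Longrightarrow> 2 * k \<le> (\<Sum>v\<in>V. f v)"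
    and S: "is_total_dominating V E S" "card S = k"
  shows "gamma_222 V E = 2 * k" "gamma_t V E = k"
proof -
  have doubled_weight: "(\<Sum>v\<in>V. if v \<in> T then 2 else 0 :: nat) = 2 * card T"
    if "is_total_dominating V E T" for T
    using that assms(1) by (intro sum_double_indicator) (auto simp: is_total_dominating_def)
  show "gamma_222 V E = 2 * k"
    unfolding gamma_222_def
  proof (rule Least_equality)
    show "\<exists>f. is_222_function V E f \<and> 2 * k = (\<Sum>v\<in>V. f v)"
      using total_dominating_imp_222_function[OF S(1) assms(1)] doubled_weight[OF S(1)] S(2)
      by metis
  qed (use lower in blast)
  show "gamma_t V E = k"
    unfolding gamma_t_def
  proof (rule Least_equality)
    fix m assume "\<exists>T. is_total_dominating V E T \<and> card T = m"
    then obtain T where T: "is_total_dominating V E T" "card T = m" by blast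
    have "2 * k \<le> 2 * m"
      using lower[OF total_dominating_imp_222_function[OF T(1) assms(1)]] doubled_weight[OF T(1)] T(2)
      by simp
    then show "k \<le> m" by simp
  qed (use S in blast)
qed

lemma path_222_function_constraints:
  assumes "is_222_function (path_V n) path_E f" "2 \<le> n"
  shows "\<And>j. j + 2 < n \<Longrightarrow> 2 \<le> f j + f (j + 2)" "2 \<le> f 1" "2 \<le> f (n - 2)"
proof -
  have neighbour_sum: "2 \<le> (\<Sum>u\<in>nbhd (path_V n) path_E v. f u)" if "v < n" for v
    using assms(1) that by (auto simp: is_222_function_def path_V_def)
  show "2 \<le> f j + f (j + 2)" if "j + 2 < n" for j
  proof -
    have "nbhd (path_V n) path_E (Suc j) = {j, j + 2}"
      using that by (auto simp: nbhd_def path_V_def path_E_def)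
    then show ?thesis using neighbour_sum[of "Suc j"] that by simp
  qed
  have "nbhd (path_V n) path_E 0 = {1}"
    using assms(2) by (auto simp: nbhd_def path_V_def path_E_def)
  then show "2 \<le> f 1" using neighbour_sum[of 0] assms(2) by simp
  have "nbhd (path_V n) path_E (n - 1) = {n - 2}"
    using assms(2) by (auto simp: nbhd_def path_V_def path_E_def)
  then show "2 \<le> f (n - 2)" using neighbour_sum[of "n - 1"] assms(2) by simp
qed

lemma sum_three_ge_4:
  fixes f :: "nat \<Rightarrow> nat"
  assumes "2 \<le> f a + f (a + 2)" "2 \<le> f (a + 1)"
  shows "4 \<le> sum f {a..<a + 3}"
  using assms by (simp add: numeral_eq_Suc add.commute)

lemma sum_blocks_of_four_ge:
  fixes f :: "nat \<Rightarrow> nat"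
  assumes pairs: "\<And>j. j + 2 < n \<Longrightarrow> 2 \<le> f j + f (j + 2)"
  shows "a + 4 * m \<le> n \<Longrightarrow> 4 * m \<le> sum f {a..<a + 4 * m}"
proof (induction m)
  case (Suc m)
  let ?b = "a + 4 * m"
  have "2 \<le> f ?b + f (?b + 2)" "2 \<le> f (?b + 1) + f (?b + 1 + 2)"
    using pairs[of ?b] pairs[of "?b + 1"] Suc.prems by simp_all
  then have "4 \<le> sum f {?b..<?b + 4}" by (simp add: numeral_eq_Suc add.commute)
  moreover have "sum f {a..<a + 4 * Suc m} = sum f {a..<?b} + sum f {?b..<?b + 4}"
    using sum.atLeastLessThan_concat[of a ?b "?b + 4" f] by (simp add: algebra_simps)
  ultimately show ?case using Suc by simp
qed simp

definition path_gamma_222 :: "nat \<Rightarrow> nat" where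
  "path_gamma_222 n =
     (if n mod 4 = 0 then n else if n mod 4 = 1 \<or> n mod 4 = 3 then n + 1 else n + 2)"

lemma path_222_function_weight_ge:
  assumes f: "is_222_function (path_V n) path_E f" and "3 \<le> n"
  shows "path_gamma_222 n \<le> sum f {0..<n}"
proof -
  have "2 \<le> n" using \<open>3 \<le> n\<close> by simp
  note pairs = path_222_function_constraints(1)[OF f \<open>2 \<le> n\<close>]
    and second = path_222_function_constraints(2)[OF f \<open>2 \<le> n\<close>]
    and penultimate = path_222_function_constraints(3)[OF f \<open>2 \<le> n\<close>]
  note blocks = sum_blocks_of_four_ge[of n f, OF pairs]
  have head: "4 \<le> sum f {0..<3}"
    using sum_three_ge_4[of f 0] pairs[of 0] second \<open>3 \<le> n\<close> by simp
  have split: "sum f {0..<n} = sum f {0..<3} + sum f {3..<3 + 4 * k} + sum f {3 + 4 * k..<n}"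
    if "3 + 4 * k \<le> n" for k
    using that by (simp add: sum.atLeastLessThan_concat)
  define k r where "k = (n - 3) div 4" and "r = (n - 3) mod 4"
  then have n: "n = 3 + 4 * k + r" and "r < 4" using \<open>3 \<le> n\<close> by simp_all
  then consider (mod3) "r = 0" | (mod0) "r = 1" | (mod1) "r = 2" | (mod2) "r = 3" by linarith
  then show ?thesis
  proof cases
    case mod3
    then show ?thesis using split[of k] head blocks[of 3 k] n by (simp add: path_gamma_222_def)
  next
    case mod0
    then have "n mod 4 = 0" using n by presburger
    have "4 * (k + 1) \<le> sum f {0..<0 + 4 * (k + 1)}" using blocks[of 0 "k + 1"] n mod0 by simp
    then show ?thesis using n mod0 \<open>n mod 4 = 0\<close> by (simp add: path_gamma_222_def)
  next
    case mod1
    then have "n mod 4 = 1" using n by presburger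
    have "sum f {3 + 4 * k..<n} = f (n - 2) + f (n - 1)" using n mod1 by (simp add: numeral_eq_Suc)
    then show ?thesis
      using split[of k] head blocks[of 3 k] penultimate n mod1 \<open>n mod 4 = 1\<close>
      by (simp add: path_gamma_222_def)
  next
    case mod2
    then have "n mod 4 = 2" using n by presburger
    have "4 \<le> sum f {3 + 4 * k..<n}"
      using sum_three_ge_4[of f "3 + 4 * k"] pairs[of "3 + 4 * k"] penultimate n mod2
      by (simp add: add.assoc)
    then show ?thesis
      using split[of k] head blocks[of 3 k] n mod2 \<open>n mod 4 = 2\<close> by (simp add: path_gamma_222_def)
  qed
qed

lemma card_less_Suc_filter:
  "card {i. i < Suc m \<and> P i} = card {i. i < m \<and> P i} + (if P m then 1 else 0)"
proof -
  have "{i. i < Suc m \<and> P i} = (if P m then insert m else id) {i. i < m \<and> P i}"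
    by (auto simp: less_Suc_eq)
  then show ?thesis by simp
qed

lemma card_less_mult_4_mod_4_in_1_2: "card {i. i < 4 * k \<and> i mod 4 \<in> {1, 2}} = 2 * k"
proof (induction k)
  case (Suc k)
  have "4 * Suc k = Suc (Suc (Suc (Suc (4 * k))))" by simp
  then show ?case using Suc by (simp only: card_less_Suc_filter) (simp add: mod_Suc)
qed simp

definition path_total_dominating_set :: "nat \<Rightarrow> nat set" where
  "path_total_dominating_set n = {i. i < n \<and> i mod 4 \<in> {1, 2}} \<union> {n - 2}"

lemma card_path_total_dominating_set:
  assumes "3 \<le> n"
  shows "2 * card (path_total_dominating_set n) = path_gamma_222 n"
proof -
  define A where "A = {i. i < n \<and> i mod 4 \<in> {1, 2}}"
  define k r where "k = n div 4" and "r = n mod 4"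
  then have n: "n = 4 * k + r" and "r < 4" by simp_all
  have "(n - 2) mod 4 = (n - 2 + 4) mod 4" by simp
  also have "n - 2 + 4 = n + 2" using assms by simp
  finally have "(n - 2) mod 4 = (r + 2) mod 4"
    unfolding r_def using mod_add_left_eq[of n 4 2] by simp
  then have "n - 2 \<in> A \<longleftrightarrow> (r + 2) mod 4 \<in> {1, 2}"
    using assms by (simp add: A_def)
  moreover have "path_total_dominating_set n = insert (n - 2) A" "finite A"
    by (auto simp: path_total_dominating_set_def A_def)
  ultimately have card_set:
    "card (path_total_dominating_set n) = card A + (if (r + 2) mod 4 \<in> {1, 2} then 0 else 1)"
    by (simp add: card_insert_if)
  consider (mod0) "r = 0" | (mod1) "r = 1" | (mod2) "r = 2" | (mod3) "r = 3" using \<open>r < 4\<close> by linarith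
  then show ?thesis
  proof cases
    case mod0
    then show ?thesis using card_set card_less_mult_4_mod_4_in_1_2[of k]
      by (simp add: A_def n path_gamma_222_def)
  next
    case mod1
    then show ?thesis using card_set card_less_mult_4_mod_4_in_1_2[of k]
      by (simp add: A_def n path_gamma_222_def card_less_Suc_filter)
  next
    case mod2
    then have "n = Suc (Suc (4 * k))" using n by simp
    then show ?thesis using card_set card_less_mult_4_mod_4_in_1_2[of k] mod2
      by (simp add: A_def path_gamma_222_def card_less_Suc_filter mod_Suc)
  next
    case mod3
    then have "n = Suc (Suc (Suc (4 * k)))" using n by simp
    then show ?thesis using card_set card_less_mult_4_mod_4_in_1_2[of k] mod3
      by (simp add: A_def path_gamma_222_def card_less_Suc_filter mod_Suc)
  qed
qed

lemma path_total_dominating_set_is_total_dominating: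
  assumes "3 \<le> n"
  shows "is_total_dominating (path_V n) path_E (path_total_dominating_set n)"
  unfolding is_total_dominating_def
proof (intro conjI ballI)
  show "path_total_dominating_set n \<subseteq> path_V n"
    using assms by (auto simp: path_total_dominating_set_def path_V_def)
  fix v assume "v \<in> path_V n"
  then have "v < n" by (simp add: path_V_def)
  consider (right_neighbour) "v mod 4 \<in> {0, 1}" "Suc v < n" | (last) "Suc v = n"
    | (left_neighbour) "v mod 4 \<in> {2, 3}"
  proof -
    have "v mod 4 = 0 \<or> v mod 4 = 1 \<or> v mod 4 = 2 \<or> v mod 4 = 3" by presburger
    then show thesis using that \<open>v < n\<close> by (cases "Suc v < n") auto
  qed
  then show "\<exists>u\<in>path_total_dominating_set n. path_E v u"
  proof cases
    case right_neighbour
    then have "Suc v \<in> path_total_dominating_set n"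
      by (auto simp: path_total_dominating_set_def mod_Suc)
    then show ?thesis by (auto simp: path_E_def)
  next
    case last
    then have "v = Suc (n - 2)" using assms by simp
    then show ?thesis by (auto simp: path_total_dominating_set_def path_E_def)
  next
    case left_neighbour
    then have "(v - 1) mod 4 \<in> {1, 2}" "v = Suc (v - 1)"
      by (cases v; auto simp: mod_Suc split: if_splits)+
    then have "v - 1 \<in> path_total_dominating_set n"
      using \<open>v < n\<close> by (auto simp: path_total_dominating_set_def)
    then show ?thesis using \<open>v = Suc (v - 1)\<close> by (auto simp: path_E_def)
  qed
qed

theorem proposition22:
  fixes n :: nat
  assumes "n \<ge> 3"
  shows "gamma_222 (path_V n) path_E = 2 * gamma_t (path_V n) path_E \<and>
         gamma_222 (path_V n) path_E =
           (if n mod 4 = 0 then n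
            else if n mod 4 = 1 \<or> n mod 4 = 3 then n + 1
            else n + 2)"
proof -
  let ?S = "path_total_dominating_set n"
  have card_S: "2 * card ?S = path_gamma_222 n"
    using card_path_total_dominating_set assms by simp
  have "finite (path_V n)" by (simp add: path_V_def)
  moreover have "2 * card ?S \<le> sum f (path_V n)" if "is_222_function (path_V n) path_E f" for f
    using path_222_function_weight_ge[OF that assms] card_S by (simp add: path_V_def)
  moreover have "is_total_dominating (path_V n) path_E ?S"
    using path_total_dominating_set_is_total_dominating assms by simp
  ultimately have "gamma_222 (path_V n) path_E = 2 * card ?S" "gamma_t (path_V n) path_E = card ?S"
    using gamma_222_gamma_t_eqI by blast+
  then show ?thesis using card_S by (simp add: path_gamma_222_def)
qed

end
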